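(* Let $m\ge1$, $n\ge2$, let $\lvert\phi\rangle\in(\mathbb{C}^d)^{\otimes m}$ be a unit vector, and let $\lvert\psi\rangle\in(\mathbb{C}^d)^{\otimes n}$ be a unit vector with Schmidt decomposition $\lvert\psi\rangle=\sum_{i=1}^d\alpha_i\lvert w_i\rangle\lvert v_i\rangle$ (with $\alpha_i\ge0$, $\{\lvert w_i\rangle\}\subseteq\mathbb{C}^d$ and $\{\lvert v_i\rangle\}\subseteq(\mathbb{C}^d)^{\otimes n-1}$ orthonormal). Set $\rho:=\sum_{i=1}^d\alpha_i^2\lvert w_i\rangle\langle w_i\rvert\otimes\lvert v_i\rangle\langle v_i\rvert$ and $\lvert\psi'\rangle:=\lvert\phi\rangle\otimes\lvert\psi\rangle\in(\mathbb{C}^d)^{\otimes m+n}$, with the qudits of $\lvert\phi\rangle$ numbered $1,\ldots,m$ and those of $\lvert\psi\rangle$ numbered $m+1,\ldots,m+n$. Let $\Pi$ be a projector acting on a subset $\mathcal{S}\subseteq\{1,\ldots,m+n\}$ of the qudits (tensored with the identity elsewhere). If $\Pi$ crosses the Schmidt cut at qudit $m+1$, i.e. $m+1\in\mathcal{S}$ and $\mathcal{S}\cap\{m+2,\ldots,m+n\}\neq\emptyset$, then $\mathrm{Tr}(\Pi\,\lvert\phi\rangle\langle\phi\rvert\otimes\rho)\ge\frac1d\mathrm{Tr}(\Pi\lvert\psi'\rangle\langle\psi'\rvert)$. Otherwise $\mathrm{Tr}(\Pi\,\lvert\phi\rangle\langle\phi\rvert\otimes\rho)=\mathrm{Tr}(\Pi\lvert\psi'\rangle\langle\psi'\rvert)$.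 *)

theory Defs
  imports Complex_Main
begin

text \<open>Computational basis of (C^d)^{tensor k}: words of length k over {0..<d}.
  Qudit number i (1-based) is the list position i-1.  A vector is a function
  from basis words to complex amplitudes; an operator is a matrix kernel
  indexed by pairs of basis words.\<close>

definition tup :: "nat \<Rightarrow> nat \<Rightarrow> nat list set" where
  "tup k d = {xs. length xs = k \<and> set xs \<subseteq> {..<d}}"

definition unit_vec :: "nat \<Rightarrow> nat \<Rightarrow> (nat list \<Rightarrow> complex) \<Rightarrow> bool" where
  "unit_vec k d v \<longleftrightarrow> (\<Sum>xs\<in>tup k d. (cmod (v xs))\<^sup>2) = 1"

definition loc_tup :: "nat set \<Rightarrow> nat \<Rightarrow> (nat \<Rightarrow> nat) set" where
  "loc_tup S d = {f. (\<forall>i\<in>S. f i < d) \<and> (\<forall>i. i \<notin> S \<longrightarrow> f i = 0)}"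

definition restr :: "nat set \<Rightarrow> nat list \<Rightarrow> (nat \<Rightarrow> nat)" where
  "restr S xs = (\<lambda>i. if i \<in> S then xs ! (i - 1) else 0)"

definition is_projector_on :: "nat set \<Rightarrow> nat \<Rightarrow> ((nat \<Rightarrow> nat) \<Rightarrow> (nat \<Rightarrow> nat) \<Rightarrow> complex) \<Rightarrow> bool" where
  "is_projector_on S d P \<longleftrightarrow>
     (\<forall>f\<in>loc_tup S d. \<forall>g\<in>loc_tup S d. P f g = cnj (P g f)) \<and>
     (\<forall>f\<in>loc_tup S d. \<forall>g\<in>loc_tup S d. (\<Sum>h\<in>loc_tup S d. P f h * P h g) = P f g)"

text \<open>The operator P acting on the qudits in S, tensored with the identity on
  the remaining qudits of {1..N}.\<close>
definition extend_op :: "nat \<Rightarrow> nat set \<Rightarrow> ((nat \<Rightarrow> nat) \<Rightarrow> (nat \<Rightarrow> nat) \<Rightarrow> complex)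
    \<Rightarrow> nat list \<Rightarrow> nat list \<Rightarrow> complex" where
  "extend_op N S P xs ys =
     (if (\<forall>i\<in>{1..N} - S. xs ! (i - 1) = ys ! (i - 1)) then P (restr S xs) (restr S ys) else 0)"

definition tr_prod :: "nat \<Rightarrow> nat \<Rightarrow> (nat list \<Rightarrow> nat list \<Rightarrow> complex)
    \<Rightarrow> (nat list \<Rightarrow> nat list \<Rightarrow> complex) \<Rightarrow> complex" where
  "tr_prod N d A B = (\<Sum>xs\<in>tup N d. \<Sum>ys\<in>tup N d. A xs ys * B ys xs)"

definition proj_op :: "(nat list \<Rightarrow> complex) \<Rightarrow> nat list \<Rightarrow> nat list \<Rightarrow> complex" where
  "proj_op v xs ys = v xs * cnj (v ys)"

end

theory Submission
  imports Defs
begin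

text \<open>
  Write \<open>y\<^sub>i = \<phi> \<otimes> w\<^sub>i \<otimes> v\<^sub>i\<close>, so that \<open>\<psi>' = \<Sum>\<^sub>i \<alpha>\<^sub>i y\<^sub>i\<close> and
  \<open>|\<phi>\<rangle>\<langle>\<phi>| \<otimes> \<rho> = \<Sum>\<^sub>i \<alpha>\<^sub>i\<^sup>2 |y\<^sub>i\<rangle>\<langle>y\<^sub>i|\<close>. For an orthogonal projector
  \<open>Tr(\<Pi> |x\<rangle>\<langle>x|) = \<parallel>\<Pi> x\<parallel>\<^sup>2\<close>, and Cauchy-Schwarz over the \<open>d\<close> Schmidt components gives
  \<open>\<parallel>\<Pi> (\<Sum>\<^sub>i \<alpha>\<^sub>i y\<^sub>i)\<parallel>\<^sup>2 \<le> d \<Sum>\<^sub>i \<alpha>\<^sub>i\<^sup>2 \<parallel>\<Pi> y\<^sub>i\<parallel>\<^sup>2\<close>. This inequality holds whether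
  or not \<open>\<Pi>\<close> crosses the cut.

  If \<open>\<Pi>\<close> does not cross the cut, it acts as the identity on qudit \<open>m+1\<close> or on the qudits
  \<open>m+2, \<dots>, m+n\<close>. Then \<open>Tr(\<Pi> X)\<close> only depends on the partial trace of \<open>X\<close> over these
  qudits, and by orthonormality of the Schmidt vectors \<open>|\<psi>\<rangle>\<langle>\<psi>|\<close> and \<open>\<rho>\<close> have the same
  partial trace over either side of the cut.
\<close>

definition projector_kernel :: "'a set \<Rightarrow> ('a \<Rightarrow> 'a \<Rightarrow> complex) \<Rightarrow> bool" where
  "projector_kernel T E \<longleftrightarrow>
     (\<forall>a\<in>T. \<forall>b\<in>T. E a b = cnj (E b a)) \<and>
     (\<forall>a\<in>T. \<forall>c\<in>T. (\<Sum>b\<in>T. E a b * E b c) = E a c)"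

definition orthonormal :: "'i set \<Rightarrow> 'x set \<Rightarrow> ('i \<Rightarrow> 'x \<Rightarrow> complex) \<Rightarrow> bool" where
  "orthonormal I X f \<longleftrightarrow>
     (\<forall>i\<in>I. \<forall>j\<in>I. (\<Sum>x\<in>X. cnj (f i x) * f j x) = (if i = j then 1 else 0))"

lemma square_sum_le_card_mult_sum_squares:
  fixes r :: "'a \<Rightarrow> real"
  shows "(\<Sum>i\<in>I. r i)\<^sup>2 \<le> real (card I) * (\<Sum>i\<in>I. (r i)\<^sup>2)"
proof -
  have row: "(\<Sum>j\<in>I. (r i - r j)\<^sup>2) = real (card I) * (r i)\<^sup>2 + (\<Sum>j\<in>I. (r j)\<^sup>2) - 2 * r i * (\<Sum>j\<in>I. r j)" for i
    by (simp add: power2_diff sum.distrib sum_subtractf sum_distrib_left mult.assoc)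
  have "0 \<le> (\<Sum>i\<in>I. \<Sum>j\<in>I. (r i - r j)\<^sup>2)"
    by (intro sum_nonneg) simp
  also have "\<dots> = 2 * (real (card I) * (\<Sum>i\<in>I. (r i)\<^sup>2)) - 2 * (\<Sum>i\<in>I. r i)\<^sup>2"
    unfolding row by (simp add: sum.distrib sum_subtractf power2_eq_square flip: sum_distrib_left sum_distrib_right)
  finally show ?thesis
    by simp
qed

lemma cmod_sum_squared_le:
  fixes z :: "'a \<Rightarrow> complex"
  shows "(cmod (\<Sum>i\<in>I. z i))\<^sup>2 \<le> real (card I) * (\<Sum>i\<in>I. (cmod (z i))\<^sup>2)"
proof -
  have "(cmod (\<Sum>i\<in>I. z i))\<^sup>2 \<le> (\<Sum>i\<in>I. cmod (z i))\<^sup>2"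
    by (intro power_mono norm_sum) simp
  also have "\<dots> \<le> real (card I) * (\<Sum>i\<in>I. (cmod (z i))\<^sup>2)"
    by (rule square_sum_le_card_mult_sum_squares)
  finally show ?thesis .
qed

lemma projector_kernel_quadratic_form:
  assumes E: "projector_kernel T E"
  shows "(\<Sum>a\<in>T. \<Sum>b\<in>T. E a b * (x b * cnj (x a)))
        = complex_of_real (\<Sum>c\<in>T. (cmod (\<Sum>b\<in>T. E c b * x b))\<^sup>2)"
proof -
  have herm: "\<And>a c. a \<in> T \<Longrightarrow> c \<in> T \<Longrightarrow> cnj (E c a) = E a c"
    and idem: "\<And>a c. a \<in> T \<Longrightarrow> c \<in> T \<Longrightarrow> (\<Sum>b\<in>T. E a b * E b c) = E a c"
    using E unfolding projector_kernel_def by (metis complex_cnj_cnj)+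
  have "complex_of_real (\<Sum>c\<in>T. (cmod (\<Sum>b\<in>T. E c b * x b))\<^sup>2)
      = (\<Sum>c\<in>T. (\<Sum>b\<in>T. E c b * x b) * cnj (\<Sum>a\<in>T. E c a * x a))"
    by (simp only: of_real_sum complex_norm_square)
  also have "\<dots> = (\<Sum>c\<in>T. \<Sum>a\<in>T. \<Sum>b\<in>T. E a c * E c b * (x b * cnj (x a)))"
  proof (rule sum.cong[OF refl])
    fix c assume c: "c \<in> T"
    have "cnj (\<Sum>a\<in>T. E c a * x a) = (\<Sum>a\<in>T. E a c * cnj (x a))"
      using c by (simp add: herm)
    then have "(\<Sum>b\<in>T. E c b * x b) * cnj (\<Sum>a\<in>T. E c a * x a)
        = (\<Sum>a\<in>T. E a c * cnj (x a)) * (\<Sum>b\<in>T. E c b * x b)"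
      by (simp only: mult.commute)
    also have "\<dots> = (\<Sum>a\<in>T. \<Sum>b\<in>T. E a c * E c b * (x b * cnj (x a)))"
      unfolding sum_product by (intro sum.cong refl) (simp only: ac_simps)
    finally show "(\<Sum>b\<in>T. E c b * x b) * cnj (\<Sum>a\<in>T. E c a * x a)
        = (\<Sum>a\<in>T. \<Sum>b\<in>T. E a c * E c b * (x b * cnj (x a)))" .
  qed
  also have "\<dots> = (\<Sum>a\<in>T. \<Sum>b\<in>T. \<Sum>c\<in>T. E a c * E c b * (x b * cnj (x a)))"
    by (subst sum.swap) (intro sum.cong refl sum.swap)
  also have "\<dots> = (\<Sum>a\<in>T. \<Sum>b\<in>T. (\<Sum>c\<in>T. E a c * E c b) * (x b * cnj (x a)))"
    by (simp add: sum_distrib_right)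
  also have "\<dots> = (\<Sum>a\<in>T. \<Sum>b\<in>T. E a b * (x b * cnj (x a)))"
    by (intro sum.cong refl) (simp add: idem)
  finally show ?thesis by simp
qed

lemma projector_kernel_quadratic_form_sum_le:
  assumes "projector_kernel T E"
  shows "Re (\<Sum>a\<in>T. \<Sum>b\<in>T. E a b * ((\<Sum>i\<in>I. c i * x i b) * cnj (\<Sum>i\<in>I. c i * x i a)))
       \<le> real (card I) * (\<Sum>i\<in>I. (cmod (c i))\<^sup>2 * Re (\<Sum>a\<in>T. \<Sum>b\<in>T. E a b * (x i b * cnj (x i a))))"
proof -
  define U where "U y t = (\<Sum>b\<in>T. E t b * y b)" for y t
  have Re_form: "Re (\<Sum>a\<in>T. \<Sum>b\<in>T. E a b * (y b * cnj (y a))) = (\<Sum>t\<in>T. (cmod (U y t))\<^sup>2)" for y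
    using projector_kernel_quadratic_form[OF assms] by (simp add: U_def)
  have U_sum: "U (\<lambda>b. \<Sum>i\<in>I. c i * x i b) t = (\<Sum>i\<in>I. c i * U (x i) t)" for t
    unfolding U_def by (simp add: sum_distrib_left sum.swap[of _ T] ac_simps)
  have "(\<Sum>t\<in>T. (cmod (\<Sum>i\<in>I. c i * U (x i) t))\<^sup>2)
      \<le> (\<Sum>t\<in>T. real (card I) * (\<Sum>i\<in>I. (cmod (c i * U (x i) t))\<^sup>2))"
    by (intro sum_mono cmod_sum_squared_le)
  also have "\<dots> = real (card I) * (\<Sum>i\<in>I. (cmod (c i))\<^sup>2 * (\<Sum>t\<in>T. (cmod (U (x i) t))\<^sup>2))"
    by (simp add: sum_distrib_left norm_mult power_mult_distrib sum.swap[of _ T])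
  finally show ?thesis unfolding Re_form U_sum .
qed

lemma orthonormal_sum_expansion_cnj:
  assumes "finite I" and "orthonormal I X f"
  shows "(\<Sum>x\<in>X. (\<Sum>i\<in>I. a i * f i x) * cnj (\<Sum>j\<in>I. b j * f j x)) = (\<Sum>i\<in>I. a i * cnj (b i))"
proof -
  have "(\<Sum>x\<in>X. (\<Sum>i\<in>I. a i * f i x) * cnj (\<Sum>j\<in>I. b j * f j x))
      = (\<Sum>x\<in>X. \<Sum>i\<in>I. \<Sum>j\<in>I. a i * cnj (b j) * (cnj (f j x) * f i x))"
    by (simp add: sum_product ac_simps)
  also have "\<dots> = (\<Sum>i\<in>I. \<Sum>j\<in>I. a i * cnj (b j) * (\<Sum>x\<in>X. cnj (f j x) * f i x))"
    by (subst sum.swap) (simp add: sum_distrib_left sum.swap[of _ X])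
  also have "\<dots> = (\<Sum>i\<in>I. \<Sum>j\<in>I. if j = i then a i * cnj (b j) else 0)"
    using assms(2) unfolding orthonormal_def by (intro sum.cong refl) simp
  also have "\<dots> = (\<Sum>i\<in>I. a i * cnj (b i))"
    using assms(1) by (simp add: sum.delta)
  finally show ?thesis .
qed

lemma orthonormal_sum_norms:
  assumes "orthonormal I X f"
  shows "(\<Sum>x\<in>X. \<Sum>i\<in>I. a i * (f i x * cnj (f i x))) = (\<Sum>i\<in>I. a i)"
proof -
  have "(\<Sum>x\<in>X. \<Sum>i\<in>I. a i * (f i x * cnj (f i x))) = (\<Sum>i\<in>I. a i * (\<Sum>x\<in>X. cnj (f i x) * f i x))"
    by (subst sum.swap) (simp add: sum_distrib_left ac_simps)
  also have "\<dots> = (\<Sum>i\<in>I. a i)"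
    using assms unfolding orthonormal_def by simp
  finally show ?thesis .
qed

text \<open>Tracing out the \<open>g\<close>-register, the vector \<open>\<Sum>\<^sub>i c\<^sub>i g\<^sub>i \<otimes> h\<^sub>i\<close> and the mixture
  \<open>\<Sum>\<^sub>i c\<^sub>i\<^sup>2 |g\<^sub>i h\<^sub>i\<rangle>\<langle>g\<^sub>i h\<^sub>i|\<close> leave the same operator behind.\<close>
lemma schmidt_partial_trace_eq:
  fixes c :: "'i \<Rightarrow> real"
  assumes "finite I" and "orthonormal I X g"
  shows "(\<Sum>x\<in>X. (\<Sum>i\<in>I. of_real (c i) * g i x * h i y') * cnj (\<Sum>i\<in>I. of_real (c i) * g i x * h i y))
       = (\<Sum>x\<in>X. \<Sum>i\<in>I. of_real ((c i)\<^sup>2) * (g i x * cnj (g i x)) * (h i y' * cnj (h i y)))"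
proof -
  have "(\<Sum>x\<in>X. (\<Sum>i\<in>I. of_real (c i) * g i x * h i y') * cnj (\<Sum>i\<in>I. of_real (c i) * g i x * h i y))
      = (\<Sum>x\<in>X. (\<Sum>i\<in>I. (of_real (c i) * h i y') * g i x) * cnj (\<Sum>i\<in>I. (of_real (c i) * h i y) * g i x))"
    by (simp add: ac_simps)
  also have "\<dots> = (\<Sum>i\<in>I. of_real ((c i)\<^sup>2) * (h i y' * cnj (h i y)))"
    unfolding orthonormal_sum_expansion_cnj[OF assms] by (simp add: power2_eq_square ac_simps)
  also have "\<dots> = (\<Sum>x\<in>X. \<Sum>i\<in>I. of_real ((c i)\<^sup>2) * (h i y' * cnj (h i y)) * (g i x * cnj (g i x)))"
    by (rule orthonormal_sum_norms[OF assms(2), symmetric])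
  finally show ?thesis by (simp add: ac_simps)
qed

lemma finite_tup: "finite (tup k d)"
proof -
  have "tup k d = {xs. set xs \<subseteq> {..<d} \<and> length xs = k}"
    unfolding tup_def by auto
  then show ?thesis
    using finite_lists_length_eq[of "{..<d}" k] by simp
qed

lemma tup_0: "tup 0 d = {[]}"
  by (auto simp: tup_def)

lemma sum_tup_1: "(\<Sum>xs\<in>tup 1 d. f xs) = (\<Sum>a<d. f [a])"
proof -
  have "tup 1 d = (\<lambda>a. [a]) ` {..<d}"
    by (auto simp: tup_def length_Suc_conv)
  then show ?thesis
    by (simp add: sum.reindex inj_on_def)
qed

lemma bij_betw_append_tup:
  "bij_betw (\<lambda>(U, V). U @ V) (tup p d \<times> tup q d) (tup (p + q) d)"
proof (rule bij_betwI')
  fix x y assume "x \<in> tup p d \<times> tup q d" "y \<in> tup p d \<times> tup q d"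
  moreover obtain U V U' V' where "x = (U, V)" "y = (U', V')"
    by fastforce
  ultimately show "((case x of (U, V) \<Rightarrow> U @ V) = (case y of (U, V) \<Rightarrow> U @ V)) = (x = y)"
    by (simp add: tup_def append_eq_append_conv)
next
  fix x assume "x \<in> tup p d \<times> tup q d"
  then show "(case x of (U, V) \<Rightarrow> U @ V) \<in> tup (p + q) d"
    by (auto simp: tup_def)
next
  fix xs assume "xs \<in> tup (p + q) d"
  then have "(take p xs, drop p xs) \<in> tup p d \<times> tup q d"
    by (auto simp: tup_def dest: in_set_takeD in_set_dropD)
  then show "\<exists>x\<in>tup p d \<times> tup q d. xs = (case x of (U, V) \<Rightarrow> U @ V)"
    by (intro bexI[of _ "(take p xs, drop p xs)"]) simp_all
qed

lemma sum_tup_add: "(\<Sum>xs\<in>tup (p + q) d. f xs) = (\<Sum>U\<in>tup p d. \<Sum>V\<in>tup q d. f (U @ V))"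
  by (simp add: sum.reindex_bij_betw[OF bij_betw_append_tup, symmetric] sum.cartesian_product split_def)

lemma sum_tup_add3:
  "(\<Sum>xs\<in>tup (p + q + r) d. f xs) = (\<Sum>U\<in>tup p d. \<Sum>V\<in>tup q d. \<Sum>W\<in>tup r d. f (U @ V @ W))"
  by (simp add: sum_tup_add)

definition agree_outside :: "nat \<Rightarrow> nat set \<Rightarrow> nat list \<Rightarrow> nat list \<Rightarrow> bool" where
  "agree_outside N S xs ys \<longleftrightarrow> (\<forall>i\<in>{1..N} - S. xs ! (i - 1) = ys ! (i - 1))"

lemma extend_op_eq:
  "extend_op N S P xs ys = (if agree_outside N S xs ys then P (restr S xs) (restr S ys) else 0)"
  by (simp add: extend_op_def agree_outside_def)

lemma restr_in_loc_tup:
  assumes "S \<subseteq> {1..N}" and "xs \<in> tup N d"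
  shows "restr S xs \<in> loc_tup S d"
proof -
  have "xs ! (i - 1) < d" if "i \<in> S" for i
  proof -
    have "i \<in> {1..N}"
      using assms(1) that by blast
    then have "xs ! (i - 1) \<in> set xs"
      using assms(2) by (auto simp: tup_def)
    then show ?thesis
      using assms(2) by (auto simp: tup_def)
  qed
  then show ?thesis
    by (auto simp: loc_tup_def restr_def)
qed

lemma restr_inj_agree_outside:
  assumes "length ys = N" "length zs = N" "agree_outside N S ys zs" "restr S ys = restr S zs"
  shows "ys = zs"
proof (rule nth_equalityI)
  fix j assume "j < length ys"
  then have "Suc j \<in> {1..N}"
    using assms(1) by simp
  then show "ys ! j = zs ! j"
  proof (cases "Suc j \<in> S")
    case True
    then show ?thesis
      using fun_cong[OF assms(4), of "Suc j"] by (simp add: restr_def)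
  next
    case False
    then show ?thesis
      using assms(3) \<open>Suc j \<in> {1..N}\<close> unfolding agree_outside_def by (metis DiffI diff_Suc_1)
  qed
qed (use assms in simp)

lemma restr_surj_agree_outside:
  assumes S: "S \<subseteq> {1..N}" and xs: "xs \<in> tup N d" and f: "f \<in> loc_tup S d"
  obtains ys where "ys \<in> tup N d" "agree_outside N S xs ys" "restr S ys = f"
proof
  define ys where "ys = map (\<lambda>j. if Suc j \<in> S then f (Suc j) else xs ! j) [0..<N]"
  have ys_nth: "ys ! j = (if Suc j \<in> S then f (Suc j) else xs ! j)" if "j < N" for j
    using that by (simp add: ys_def)
  have ys_length: "length ys = N"
    by (simp add: ys_def)
  have "ys ! j < d" if "j < N" for j
  proof -
    have "xs ! j \<in> set xs"
      using xs that by (simp add: tup_def)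
    then show ?thesis
      using ys_nth[OF that] f xs by (auto simp: loc_tup_def tup_def)
  qed
  then show "ys \<in> tup N d"
    using ys_length by (auto simp: tup_def in_set_conv_nth)
  show "agree_outside N S xs ys"
    unfolding agree_outside_def by (auto simp: ys_nth)
  show "restr S ys = f"
  proof
    fix i show "restr S ys i = f i"
    proof (cases "i \<in> S")
      case True
      then have "i \<in> {1..N}"
        using S by blast
      then have "i - 1 < N" "Suc (i - 1) = i"
        by auto
      then show ?thesis
        using True ys_nth[of "i - 1"] by (simp add: restr_def)
    qed (use f in \<open>simp add: restr_def loc_tup_def\<close>)
  qed
qed

lemma bij_betw_restr:
  assumes "S \<subseteq> {1..N}" and "xs \<in> tup N d"
  shows "bij_betw (restr S) {ys \<in> tup N d. agree_outside N S xs ys} (loc_tup S d)"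
proof (rule bij_betwI')
  fix ys zs assume "ys \<in> {ys \<in> tup N d. agree_outside N S xs ys}" "zs \<in> {ys \<in> tup N d. agree_outside N S xs ys}"
  then show "(restr S ys = restr S zs) = (ys = zs)"
    using restr_inj_agree_outside[of ys N zs S] by (auto simp: tup_def agree_outside_def)
next
  fix ys assume "ys \<in> {ys \<in> tup N d. agree_outside N S xs ys}"
  then show "restr S ys \<in> loc_tup S d"
    using restr_in_loc_tup[OF assms(1)] by blast
next
  fix f assume "f \<in> loc_tup S d"
  then show "\<exists>ys\<in>{ys \<in> tup N d. agree_outside N S xs ys}. f = restr S ys"
    by (metis (mono_tags, lifting) assms mem_Collect_eq restr_surj_agree_outside)
qed

lemma projector_kernel_extend_op:
  assumes S: "S \<subseteq> {1..N}" and P: "is_projector_on S d P"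
  shows "projector_kernel (tup N d) (extend_op N S P)"
  unfolding projector_kernel_def
proof (intro conjI ballI)
  fix xs ys assume xs: "xs \<in> tup N d" and ys: "ys \<in> tup N d"
  have "P (restr S xs) (restr S ys) = cnj (P (restr S ys) (restr S xs))"
    using P restr_in_loc_tup[OF S xs] restr_in_loc_tup[OF S ys]
    unfolding is_projector_on_def by blast
  then show "extend_op N S P xs ys = cnj (extend_op N S P ys xs)"
    by (auto simp: extend_op_eq agree_outside_def)
next
  fix xs zs assume xs: "xs \<in> tup N d" and zs: "zs \<in> tup N d"
  let ?A = "{ys \<in> tup N d. agree_outside N S xs ys}"
  have "(\<Sum>ys\<in>tup N d. extend_op N S P xs ys * extend_op N S P ys zs)
      = (\<Sum>ys\<in>?A. if agree_outside N S xs zs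
            then P (restr S xs) (restr S ys) * P (restr S ys) (restr S zs) else 0)"
    by (rule sum.mono_neutral_cong_right) (auto simp: finite_tup extend_op_eq agree_outside_def)
  also have "\<dots> = (if agree_outside N S xs zs
      then \<Sum>h\<in>loc_tup S d. P (restr S xs) h * P h (restr S zs) else 0)"
    using sum.reindex_bij_betw[OF bij_betw_restr[OF S xs], of "\<lambda>h. P (restr S xs) h * P h (restr S zs)"]
    by simp
  also have "\<dots> = extend_op N S P xs zs"
  proof -
    have "(\<Sum>h\<in>loc_tup S d. P (restr S xs) h * P h (restr S zs)) = P (restr S xs) (restr S zs)"
      using P restr_in_loc_tup[OF S xs] restr_in_loc_tup[OF S zs]
      unfolding is_projector_on_def by blast
    then show ?thesis
      by (simp add: extend_op_eq)
  qed
  finally show "(\<Sum>ys\<in>tup N d. extend_op N S P xs ys * extend_op N S P ys zs) = extend_op N S P xs zs" .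
qed

lemma agree_outside_iff: "agree_outside N S xs ys \<longleftrightarrow> (\<forall>j<N. Suc j \<notin> S \<longrightarrow> xs ! j = ys ! j)"
  unfolding agree_outside_def
proof safe
  fix j assume "\<forall>i\<in>{1..N} - S. xs ! (i - 1) = ys ! (i - 1)" "j < N" "Suc j \<notin> S"
  then show "xs ! j = ys ! j"
    by (drule_tac bspec[of _ _ "Suc j"]) auto
next
  fix i assume "\<forall>j<N. Suc j \<notin> S \<longrightarrow> xs ! j = ys ! j" "i \<in> {1..N}" "i \<notin> S"
  then show "xs ! (i - 1) = ys ! (i - 1)"
    by (cases i) auto
qed

lemma nth_append3_eq_iff:
  assumes "length U = p" "length U' = p" "length V = q" "length V' = q" "length Z = q"
  shows "(U @ V @ W) ! j = (U' @ V' @ W') ! j \<longleftrightarrow>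
    (if p \<le> j \<and> j < p + q then V ! (j - p) = V' ! (j - p) else (U @ Z @ W) ! j = (U' @ Z @ W') ! j)"
  using assms by (auto simp: nth_append)

lemma agree_outside_idle_block:
  assumes "S \<inter> {p+1..p+q} = {}" "p + q \<le> N"
    and "length U = p" "length U' = p" "length V = q" "length V' = q" "length Z = q"
  shows "agree_outside N S (U @ V @ W) (U' @ V' @ W')
     \<longleftrightarrow> V = V' \<and> agree_outside N S (U @ Z @ W) (U' @ Z @ W')"
proof -
  have block: "j < N \<and> Suc j \<notin> S" if "p \<le> j" "j < p + q" for j
    using assms(1,2) that by auto
  have V_eq_iff: "V = V' \<longleftrightarrow> (\<forall>j. p \<le> j \<and> j < p + q \<longrightarrow> V ! (j - p) = V' ! (j - p))"
    using assms(5,6) by (auto simp: list_eq_iff_nth_eq dest: spec[of _ "_ + p"])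
  have Z_eq: "(U @ Z @ W) ! j = (U' @ Z @ W') ! j" if "p \<le> j" "j < p + q" for j
    using nth_append3_eq_iff[of U p U' Z q Z Z W j W'] assms that by simp
  show ?thesis
    unfolding agree_outside_iff nth_append3_eq_iff[OF assms(3-7)] V_eq_iff
    using block Z_eq by (smt (verit))
qed

lemma restr_idle_block:
  assumes "S \<subseteq> {1..N}" "S \<inter> {p+1..p+q} = {}"
    and "length U = p" "length V = q" "length Z = q"
  shows "restr S (U @ V @ W) = restr S (U @ Z @ W)"
proof
  fix i
  have "p + q \<le> i - 1 \<or> i - 1 < p" if "i \<in> S"
    using assms(1,2) that by force
  then show "restr S (U @ V @ W) i = restr S (U @ Z @ W) i"
    using assms(3-5) by (auto simp: restr_def nth_append)
qed

lemma extend_op_idle_block: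
  assumes "S \<subseteq> {1..N}" "S \<inter> {p+1..p+q} = {}" "p + q \<le> N"
    and "length U = p" "length U' = p" "length V = q" "length V' = q" "length Z = q"
  shows "extend_op N S P (U @ V @ W) (U' @ V' @ W')
     = (if V' = V then extend_op N S P (U @ Z @ W) (U' @ Z @ W') else 0)"
  using agree_outside_idle_block[OF assms(2-8)]
    restr_idle_block[OF assms(1,2,4,6,8)] restr_idle_block[OF assms(1,2,5,7,8)]
  by (auto simp: extend_op_eq)

lemma sum_extend_op_idle_block:
  assumes S: "S \<subseteq> {1..N}" and idle: "S \<inter> {p+1..p+q} = {}" and "p + q \<le> N"
    and "U \<in> tup p d" "U' \<in> tup p d" "V \<in> tup q d" "length Z = q"
  shows "(\<Sum>V'\<in>tup q d. \<Sum>W'\<in>tup r d. extend_op N S P (U @ V @ W) (U' @ V' @ W') * D (U' @ V' @ W') (U @ V @ W))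
       = (\<Sum>W'\<in>tup r d. extend_op N S P (U @ Z @ W) (U' @ Z @ W') * D (U' @ V @ W') (U @ V @ W))"
proof -
  have "extend_op N S P (U @ V @ W) (U' @ V' @ W')
      = (if V' = V then extend_op N S P (U @ Z @ W) (U' @ Z @ W') else 0)"
    if "V' \<in> tup q d" for V' W'
    by (rule extend_op_idle_block[OF S idle]) (use assms that in \<open>auto simp: tup_def\<close>)
  then have "(\<Sum>V'\<in>tup q d. \<Sum>W'\<in>tup r d. extend_op N S P (U @ V @ W) (U' @ V' @ W') * D (U' @ V' @ W') (U @ V @ W))
      = (\<Sum>V'\<in>tup q d. if V' = V
           then \<Sum>W'\<in>tup r d. extend_op N S P (U @ Z @ W) (U' @ Z @ W') * D (U' @ V' @ W') (U @ V @ W) else 0)"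
    by (intro sum.cong refl) simp
  also have "\<dots> = (\<Sum>W'\<in>tup r d. extend_op N S P (U @ Z @ W) (U' @ Z @ W') * D (U' @ V @ W') (U @ V @ W))"
    using assms(6) by (simp add: sum.delta[OF finite_tup])
  finally show ?thesis .
qed

lemma tr_prod_extend_op_idle_block_eq_0:
  assumes S: "S \<subseteq> {1..p+q+r}" and idle: "S \<inter> {p+1..p+q} = {}"
    and D: "\<And>U U' W W'. U \<in> tup p d \<Longrightarrow> U' \<in> tup p d \<Longrightarrow> W \<in> tup r d \<Longrightarrow> W' \<in> tup r d \<Longrightarrow>
              (\<Sum>V\<in>tup q d. D (U' @ V @ W') (U @ V @ W)) = 0"
  shows "tr_prod (p+q+r) d (extend_op (p+q+r) S P) D = 0"
proof -
  let ?E = "extend_op (p + q + r) S P"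
  let ?Z = "replicate q 0"
  have "tr_prod (p+q+r) d ?E D = (\<Sum>U\<in>tup p d. \<Sum>V\<in>tup q d. \<Sum>W\<in>tup r d. \<Sum>U'\<in>tup p d.
      \<Sum>V'\<in>tup q d. \<Sum>W'\<in>tup r d. ?E (U @ V @ W) (U' @ V' @ W') * D (U' @ V' @ W') (U @ V @ W))"
    unfolding tr_prod_def sum_tup_add3 ..
  also have "\<dots> = (\<Sum>U\<in>tup p d. \<Sum>V\<in>tup q d. \<Sum>W\<in>tup r d. \<Sum>U'\<in>tup p d.
      \<Sum>W'\<in>tup r d. ?E (U @ ?Z @ W) (U' @ ?Z @ W') * D (U' @ V @ W') (U @ V @ W))"
    by (simp add: sum_extend_op_idle_block[OF S idle, where Z = "replicate q 0"])
  also have "\<dots> = (\<Sum>U\<in>tup p d. \<Sum>W\<in>tup r d. \<Sum>U'\<in>tup p d. \<Sum>W'\<in>tup r d.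
      ?E (U @ ?Z @ W) (U' @ ?Z @ W') * (\<Sum>V\<in>tup q d. D (U' @ V @ W') (U @ V @ W)))"
    by (simp only: sum_distrib_left sum.swap[of _ "tup q d" "tup r d"] sum.swap[of _ "tup q d" "tup p d"])
  also have "\<dots> = 0"
    by (simp add: D)
  finally show ?thesis .
qed

lemma tr_prod_cong:
  assumes "\<And>xs ys. xs \<in> tup N d \<Longrightarrow> ys \<in> tup N d \<Longrightarrow> X xs ys = Y xs ys"
  shows "tr_prod N d E X = tr_prod N d E Y"
  unfolding tr_prod_def using assms by (intro sum.cong refl) simp

lemma tr_prod_sum:
  "tr_prod N d E (\<lambda>xs ys. \<Sum>i\<in>I. c i * X i xs ys) = (\<Sum>i\<in>I. c i * tr_prod N d E (X i))"
  unfolding tr_prod_def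
  by (simp add: sum_distrib_left sum.swap[of _ I] ac_simps)

lemma tr_prod_diff:
  "tr_prod N d E (\<lambda>xs ys. X xs ys - Y xs ys) = tr_prod N d E X - tr_prod N d E Y"
  unfolding tr_prod_def by (simp add: right_diff_distrib sum_subtractf)

definition tensor_op :: "nat \<Rightarrow> (nat list \<Rightarrow> nat list \<Rightarrow> complex) \<Rightarrow> (nat list \<Rightarrow> nat list \<Rightarrow> complex)
    \<Rightarrow> nat list \<Rightarrow> nat list \<Rightarrow> complex" where
  "tensor_op m A B xs ys = A (take m xs) (take m ys) * B (drop m xs) (drop m ys)"

lemma tr_prod_tensor_op_first_idle:
  assumes S: "S \<subseteq> {1..m + Suc k}" and idle: "Suc m \<notin> S"
    and AB: "\<And>W W'. W \<in> tup k d \<Longrightarrow> W' \<in> tup k d \<Longrightarrow>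
              (\<Sum>a<d. A (a # W') (a # W)) = (\<Sum>a<d. B (a # W') (a # W))"
  shows "tr_prod (m + Suc k) d (extend_op (m + Suc k) S P) (tensor_op m C A)
       = tr_prod (m + Suc k) d (extend_op (m + Suc k) S P) (tensor_op m C B)"
proof -
  have N: "m + Suc k = m + 1 + k"
    by simp
  have "tr_prod (m + 1 + k) d (extend_op (m + 1 + k) S P)
      (\<lambda>xs ys. tensor_op m C A xs ys - tensor_op m C B xs ys) = 0"
  proof (rule tr_prod_extend_op_idle_block_eq_0)
    show "S \<subseteq> {1..m + 1 + k}" "S \<inter> {m + 1..m + 1} = {}"
      using S idle by auto
  next
    fix U U' W W' assume "U \<in> tup m d" "U' \<in> tup m d" "W \<in> tup k d" "W' \<in> tup k d"
    moreover from this have "length U = m" "length U' = m"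
      by (simp_all add: tup_def)
    ultimately show "(\<Sum>V\<in>tup 1 d. tensor_op m C A (U' @ V @ W') (U @ V @ W)
                             - tensor_op m C B (U' @ V @ W') (U @ V @ W)) = 0"
      unfolding sum_tup_1 by (simp add: tensor_op_def sum_subtractf AB flip: sum_distrib_left)
  qed
  then show ?thesis
    unfolding N tr_prod_diff by simp
qed

lemma tr_prod_tensor_op_rest_idle:
  assumes S: "S \<subseteq> {1..m + Suc k}" and idle: "S \<inter> {m+2..m + Suc k} = {}"
    and AB: "\<And>a a'. a < d \<Longrightarrow> a' < d \<Longrightarrow>
              (\<Sum>W\<in>tup k d. A (a' # W) (a # W)) = (\<Sum>W\<in>tup k d. B (a' # W) (a # W))"
  shows "tr_prod (m + Suc k) d (extend_op (m + Suc k) S P) (tensor_op m C A)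
       = tr_prod (m + Suc k) d (extend_op (m + Suc k) S P) (tensor_op m C B)"
proof -
  have N: "m + Suc k = Suc m + k + 0"
    by simp
  have "tr_prod (Suc m + k + 0) d (extend_op (Suc m + k + 0) S P)
      (\<lambda>xs ys. tensor_op m C A xs ys - tensor_op m C B xs ys) = 0"
  proof (rule tr_prod_extend_op_idle_block_eq_0)
    show "S \<subseteq> {1..Suc m + k + 0}" "S \<inter> {Suc m + 1..Suc m + k} = {}"
      using S idle by auto
  next
    fix U U' W W' assume U: "U \<in> tup (Suc m) d" and U': "U' \<in> tup (Suc m) d"
      and "W \<in> tup 0 d" "W' \<in> tup 0 d"
    then have "W = []" "W' = []"
      by (simp_all add: tup_0)
    have split: "take m (X @ V) = take m X" "drop m (X @ V) = X ! m # V" "X ! m < d"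
      if "X \<in> tup (Suc m) d" for X V :: "nat list"
    proof -
      have "length X = Suc m" "set X \<subseteq> {..<d}"
        using that by (simp_all add: tup_def)
      moreover from this have "drop m X = [X ! m]"
        by (metis Cons_nth_drop_Suc drop_all lessI order_refl)
      ultimately show "take m (X @ V) = take m X" "drop m (X @ V) = X ! m # V"
        by simp_all
      show "X ! m < d"
        using \<open>length X = Suc m\<close> \<open>set X \<subseteq> {..<d}\<close> by (metis lessI lessThan_iff nth_mem subsetD)
    qed
    have "tensor_op m C X (U' @ V @ W') (U @ V @ W) = C (take m U') (take m U) * X (U' ! m # V) (U ! m # V)"
      for X V
      unfolding tensor_op_def \<open>W = []\<close> \<open>W' = []\<close> append_Nil2 split(1,2)[OF U] split(1,2)[OF U'] ..
    then show "(\<Sum>V\<in>tup k d. tensor_op m C A (U' @ V @ W') (U @ V @ W)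
                             - tensor_op m C B (U' @ V @ W') (U @ V @ W)) = 0"
      using split(3)[OF U] split(3)[OF U'] by (simp add: sum_subtractf AB flip: sum_distrib_left)
  qed
  then show ?thesis
    unfolding N tr_prod_diff by simp
qed

text \<open>The state \<open>\<rho>\<close>: \<open>|\<psi>\<rangle>\<langle>\<psi>|\<close> in the Schmidt basis with the cross terms \<open>i \<noteq> j\<close> dropped.\<close>
definition schmidt_mixture :: "nat \<Rightarrow> (nat \<Rightarrow> real) \<Rightarrow> (nat \<Rightarrow> nat \<Rightarrow> complex) \<Rightarrow> (nat \<Rightarrow> nat list \<Rightarrow> complex)
    \<Rightarrow> nat list \<Rightarrow> nat list \<Rightarrow> complex" where
  "schmidt_mixture d alpha w v xs ys = (\<Sum>i=1..d. complex_of_real ((alpha i)\<^sup>2)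
     * (w i (hd xs) * cnj (w i (hd ys))) * (v i (tl xs) * cnj (v i (tl ys))))"

lemma schmidt_mixture_partial_trace_first:
  assumes w: "orthonormal {1..d} {..<d} w"
    and schmidt: "\<forall>a<d. \<forall>ys\<in>Y. psi (a # ys) = (\<Sum>i=1..d. complex_of_real (alpha i) * w i a * v i ys)"
    and "B \<in> Y" "B' \<in> Y"
  shows "(\<Sum>a<d. schmidt_mixture d alpha w v (a # B') (a # B)) = (\<Sum>a<d. proj_op psi (a # B') (a # B))"
  using schmidt_partial_trace_eq[OF finite_atLeastAtMost w, of alpha v B' B] assms(3,4)
  by (simp add: schmidt schmidt_mixture_def proj_op_def)

lemma schmidt_mixture_partial_trace_rest:
  assumes v: "orthonormal {1..d} Y v"
    and schmidt: "\<forall>a<d. \<forall>ys\<in>Y. psi (a # ys) = (\<Sum>i=1..d. complex_of_real (alpha i) * w i a * v i ys)"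
    and "a < d" "a' < d"
  shows "(\<Sum>ys\<in>Y. schmidt_mixture d alpha w v (a' # ys) (a # ys)) = (\<Sum>ys\<in>Y. proj_op psi (a' # ys) (a # ys))"
  using schmidt_partial_trace_eq[OF finite_atLeastAtMost v, of alpha w a' a] assms(3,4)
  by (simp add: schmidt schmidt_mixture_def proj_op_def ac_simps)

lemma tr_prod_tensor_schmidt_mixture_ge:
  assumes E: "projector_kernel (tup (m + Suc k) d) E"
    and schmidt: "\<forall>a<d. \<forall>ys\<in>tup k d. psi (a # ys) = (\<Sum>i=1..d. complex_of_real (alpha i) * w i a * v i ys)"
  shows "Re (tr_prod (m + Suc k) d E (proj_op (\<lambda>xs. phi (take m xs) * psi (drop m xs))))
       \<le> real d * Re (tr_prod (m + Suc k) d E (tensor_op m (proj_op phi) (schmidt_mixture d alpha w v)))"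
proof -
  let ?T = "tup (m + Suc k) d"
  define y where "y i xs = phi (take m xs) * (w i (hd (drop m xs)) * v i (tl (drop m xs)))" for i xs
  have form: "tr_prod (m + Suc k) d E (proj_op x) = (\<Sum>a\<in>?T. \<Sum>b\<in>?T. E a b * (x b * cnj (x a)))" for x
    by (simp add: tr_prod_def proj_op_def)
  have mixture: "tensor_op m (proj_op phi) (schmidt_mixture d alpha w v)
      = (\<lambda>xs ys. \<Sum>i=1..d. complex_of_real ((alpha i)\<^sup>2) * proj_op (y i) xs ys)"
    by (simp add: fun_eq_iff tensor_op_def schmidt_mixture_def proj_op_def y_def sum_distrib_left ac_simps)
  have expand: "phi (take m xs) * psi (drop m xs) = (\<Sum>i=1..d. complex_of_real (alpha i) * y i xs)"
    if xs: "xs \<in> ?T" for xs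
  proof -
    obtain a ys where a_ys: "drop m xs = a # ys"
      using xs by (cases "drop m xs") (auto simp: tup_def)
    moreover have "set (drop m xs) \<subseteq> {..<d}" "length (drop m xs) = Suc k"
      using xs set_drop_subset[of m xs] by (auto simp: tup_def)
    ultimately have "a < d" "ys \<in> tup k d"
      by (auto simp: tup_def)
    then show ?thesis
      using schmidt a_ys by (simp add: y_def sum_distrib_left ac_simps)
  qed
  have "Re (tr_prod (m + Suc k) d E (proj_op (\<lambda>xs. phi (take m xs) * psi (drop m xs))))
      = Re (tr_prod (m + Suc k) d E (proj_op (\<lambda>xs. \<Sum>i=1..d. complex_of_real (alpha i) * y i xs)))"
    by (intro arg_cong[where f = Re] tr_prod_cong) (simp add: proj_op_def expand)
  also have "\<dots> \<le> real d * (\<Sum>i=1..d. (alpha i)\<^sup>2 * Re (tr_prod (m + Suc k) d E (proj_op (y i))))"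
    using projector_kernel_quadratic_form_sum_le[OF E,
        where I = "{1..d}" and c = "\<lambda>i. complex_of_real (alpha i)" and x = y]
    unfolding form by simp
  also have "\<dots> = real d * Re (tr_prod (m + Suc k) d E (tensor_op m (proj_op phi) (schmidt_mixture d alpha w v)))"
    by (simp add: mixture tr_prod_sum Re_sum)
  finally show ?thesis .
qed

lemma tr_prod_tensor_schmidt_mixture_eq_if_not_crossing:
  assumes S: "S \<subseteq> {1..m + Suc k}"
    and not_crossing: "\<not> (Suc m \<in> S \<and> S \<inter> {m+2..m + Suc k} \<noteq> {})"
    and w: "orthonormal {1..d} {..<d} w" and v: "orthonormal {1..d} (tup k d) v"
    and schmidt: "\<forall>a<d. \<forall>ys\<in>tup k d. psi (a # ys) = (\<Sum>i=1..d. complex_of_real (alpha i) * w i a * v i ys)"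
  shows "tr_prod (m + Suc k) d (extend_op (m + Suc k) S P) (tensor_op m C (schmidt_mixture d alpha w v))
       = tr_prod (m + Suc k) d (extend_op (m + Suc k) S P) (tensor_op m C (proj_op psi))"
proof -
  from not_crossing consider "Suc m \<notin> S" | "S \<inter> {m+2..m + Suc k} = {}"
    by blast
  then show ?thesis
  proof cases
    case 1
    show ?thesis
      by (rule tr_prod_tensor_op_first_idle[OF S 1])
        (rule schmidt_mixture_partial_trace_first[OF w schmidt])
  next
    case 2
    show ?thesis
      by (rule tr_prod_tensor_op_rest_idle[OF S 2])
        (rule schmidt_mixture_partial_trace_rest[OF v schmidt])
  qed
qed

lemma unit_vec_dim_pos:
  assumes "unit_vec m d phi" and "m \<ge> 1"
  shows "0 < d"
proof (rule ccontr)
  assume "\<not> 0 < d"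
  then have "tup m d = {}"
    using assms(2) by (auto simp: tup_def)
  then show False
    using assms(1) by (simp add: unit_vec_def)
qed

theorem corollary2:
  fixes m n d :: nat
    and phi psi :: "nat list \<Rightarrow> complex"
    and alpha :: "nat \<Rightarrow> real"
    and w :: "nat \<Rightarrow> nat \<Rightarrow> complex"
    and v :: "nat \<Rightarrow> nat list \<Rightarrow> complex"
    and S :: "nat set"
    and P :: "(nat \<Rightarrow> nat) \<Rightarrow> (nat \<Rightarrow> nat) \<Rightarrow> complex"
  assumes m: "m \<ge> 1" and n: "n \<ge> 2"
    and phi_unit: "unit_vec m d phi"
    and psi_unit: "unit_vec n d psi"
    and alpha_nonneg: "\<forall>i\<in>{1..d}. alpha i \<ge> 0"
    and w_orthonormal: "\<forall>i\<in>{1..d}. \<forall>j\<in>{1..d}.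
          (\<Sum>a<d. cnj (w i a) * w j a) = (if i = j then 1 else 0)"
    and v_orthonormal: "\<forall>i\<in>{1..d}. \<forall>j\<in>{1..d}.
          (\<Sum>ys\<in>tup (n - 1) d. cnj (v i ys) * v j ys) = (if i = j then 1 else 0)"
    and schmidt: "\<forall>a<d. \<forall>ys\<in>tup (n - 1) d.
          psi (a # ys) = (\<Sum>i=1..d. complex_of_real (alpha i) * w i a * v i ys)"
    and rho_def: "rho = (\<lambda>xs ys. \<Sum>i=1..d. complex_of_real ((alpha i)\<^sup>2)
          * (w i (hd xs) * cnj (w i (hd ys))) * (v i (tl xs) * cnj (v i (tl ys))))"
    and psi'_def: "psi' = (\<lambda>xs. phi (take m xs) * psi (drop m xs))"
    and sigma_def: "sigma = (\<lambda>xs ys. proj_op phi (take m xs) (take m ys)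
          * rho (drop m xs) (drop m ys))"
    and S_sub: "S \<subseteq> {1..m+n}"
    and P_proj: "is_projector_on S d P"
    and Pi_def: "Pi = extend_op (m + n) S P"
  shows "(m + 1 \<in> S \<and> S \<inter> {m+2..m+n} \<noteq> {} \<longrightarrow>
            Re (tr_prod (m + n) d Pi sigma) \<ge> (1 / real d) * Re (tr_prod (m + n) d Pi (proj_op psi')))
       \<and> (\<not> (m + 1 \<in> S \<and> S \<inter> {m+2..m+n} \<noteq> {}) \<longrightarrow>
            tr_prod (m + n) d Pi sigma = tr_prod (m + n) d Pi (proj_op psi'))"
proof -
  obtain k where k: "n = Suc k"
    using n by (cases n) auto
  have sigma: "sigma = tensor_op m (proj_op phi) (schmidt_mixture d alpha w v)"
    by (simp add: sigma_def rho_def tensor_op_def schmidt_mixture_def fun_eq_iff)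
  have psi': "proj_op psi' = tensor_op m (proj_op phi) (proj_op psi)"
    by (simp add: psi'_def proj_op_def tensor_op_def fun_eq_iff ac_simps)
  have schmidt': "\<forall>a<d. \<forall>ys\<in>tup k d. psi (a # ys) = (\<Sum>i=1..d. complex_of_real (alpha i) * w i a * v i ys)"
    using schmidt k by simp
  have w: "orthonormal {1..d} {..<d} w" and v: "orthonormal {1..d} (tup k d) v"
    using w_orthonormal v_orthonormal k by (simp_all add: orthonormal_def)
  have S: "S \<subseteq> {1..m + Suc k}"
    using S_sub k by simp
  have "Re (tr_prod (m + n) d Pi (proj_op psi')) \<le> real d * Re (tr_prod (m + n) d Pi sigma)"
    using tr_prod_tensor_schmidt_mixture_ge[OF projector_kernel_extend_op[OF S P_proj] schmidt']
    by (simp add: k Pi_def sigma psi'_def)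
  moreover have "tr_prod (m + n) d Pi sigma = tr_prod (m + n) d Pi (proj_op psi')"
    if "\<not> (m + 1 \<in> S \<and> S \<inter> {m+2..m+n} \<noteq> {})"
    using tr_prod_tensor_schmidt_mixture_eq_if_not_crossing[OF S _ w v schmidt'] that
    by (simp add: k Pi_def sigma psi')
  ultimately show ?thesis
    using unit_vec_dim_pos[OF phi_unit m] by (simp add: field_simps)
qed

end
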